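(* Let $T$ be an interface element, labelled (interchanging the roles of $+$ and $-$, including $\beta^\pm$, if necessary) so that $|\overline{\mathcal I^-}|\le|\overline{\mathcal I^+}|$. Let $F\in l$ be arbitrary and put $\mathbf v(F)=\bar{\mathbf n}$. Define the vectors $$\boldsymbol\gamma=\big(\nabla\psi_{i,T}(F)\cdot\bar{\mathbf n}\big)_{i\in\overline{\mathcal I^-}},\qquad \boldsymbol\delta=\Big(\frac1{|b_i|}\int_{b_i\cap T^-}L(X)\,ds\Big)_{i\in\overline{\mathcal I^-}},\qquad L(X)=\bar{\mathbf n}\cdot(X-D).$$ Then, for every interface location, $\boldsymbol\gamma^T\boldsymbol\delta\in[0,1]$.
   Context: On a mesh element $T$ (a triangle or a rectangle) with edges $b_i$, $i\in\mathcal I=\{1,\dots,N\}$ ($N=3$ for triangles, $N=4$ for rectangles), $\Pi_T=\mathrm{span}\{1,x,y\}$ (Crouzeix–Raviart, triangles) or $\Pi_T=\mathrm{span}\{1,x,y,x^2-y^2\}$ (rotated-$Q_1$, rectangles), and $\psi_{i,T}\in\Pi_T$ are the shape functions with $\frac{1}{|b_j|}\int_{b_j}\psi_{i,T}\,ds=\delta_{ij}$. The mesh is a Cartesian triangular or rectangular mesh of mesh size $h$. $T$ is an interface element: a curve $\Gamma$ separating $\Omega^+$ from $\Omega^-$ crosses the interior of $T$ and meets $\partial T$ at exactly two points $D,E$ lying on different edges; $l$ is the segment $DE$, $\bar{\mathbf n}$ a unit normal to $l$ (either orientation; the quantity $\boldsymbol\gamma^T\boldsymbol\delta$ does not depend on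 it), and $T^\pm=T\cap\Omega^\pm$. Index sets: $\mathcal I^s=\{i: b_i\subseteq\overline{T^s}\}$, $\mathcal I^{int}=\{i: b_i\cap T^+\neq\emptyset\text{ and }b_i\cap T^-\neq\emptyset\}$, $\overline{\mathcal I^s}=\mathcal I^s\cup\mathcal I^{int}$, $s=\pm$. Note that $b_i\cap T^-$ coincides with the part of $b_i$ on the corresponding side of $l$, since $\Gamma$ and $l$ meet $\partial T$ at the same points. *)

theory Defs
  imports "HOL-Analysis.Analysis"
begin

definition grad :: "(real \<times> real \<Rightarrow> real) \<Rightarrow> real \<times> real \<Rightarrow> real \<times> real" where
  "grad f X = (deriv (\<lambda>t. f (t, snd X)) (fst X), deriv (\<lambda>t. f (fst X, t)) (snd X))"

definition CR_space :: "(real \<times> real \<Rightarrow> real) set" where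
  "CR_space = {f. \<exists>a b c. \<forall>X. f X = a + b * fst X + c * snd X}"

definition RQ1_space :: "(real \<times> real \<Rightarrow> real) set" where
  "RQ1_space = {f. \<exists>a b c d. \<forall>X.
      f X = a + b * fst X + c * snd X + d * ((fst X)\<^sup>2 - (snd X)\<^sup>2)}"

text \<open>Elements of a Cartesian triangular mesh of mesh size h (half squares, either
  diagonal) and of a Cartesian rectangular mesh of mesh size h, given by the list of
  their vertices in boundary order.\<close>
definition cart_triangles :: "real \<Rightarrow> (real \<times> real) list set" where
  "cart_triangles h = {[P, P + (s1 * h, 0), P + (0, s2 * h)] | P s1 s2.
      s1 \<in> {-1, 1} \<and> s2 \<in> {-1, 1}}"

definition cart_rectangles :: "real \<Rightarrow> (real \<times> real) list set" where
  "cart_rectangles h = {[(x0, y0), (x0 + h, y0), (x0 + h, y0 + h), (x0, y0 + h)] | x0 y0. True}"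

definition elem :: "(real \<times> real) list \<Rightarrow> (real \<times> real) set" where
  "elem V = convex hull (set V)"

definition edge_pt :: "(real \<times> real) list \<Rightarrow> nat \<Rightarrow> real \<Rightarrow> real \<times> real" where
  "edge_pt V i t = V ! i + t *\<^sub>R (V ! ((i + 1) mod length V) - V ! i)"

definition edge :: "(real \<times> real) list \<Rightarrow> nat \<Rightarrow> (real \<times> real) set" where
  "edge V i = closed_segment (V ! i) (V ! ((i + 1) mod length V))"

text \<open>(1/|b_i|) \<integral>_{b_i \<inter> S} g ds, written with the affine parametrisation of b_i
  (ds = |b_i| dt).\<close>
definition edge_avg_on :: "(real \<times> real) list \<Rightarrow> nat \<Rightarrow> (real \<times> real) set
    \<Rightarrow> (real \<times> real \<Rightarrow> real) \<Rightarrow> real" where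
  "edge_avg_on V i S g = integral {0..1} (\<lambda>t. indicator S (edge_pt V i t) * g (edge_pt V i t))"

definition edge_avg :: "(real \<times> real) list \<Rightarrow> nat \<Rightarrow> (real \<times> real \<Rightarrow> real) \<Rightarrow> real" where
  "edge_avg V i g = edge_avg_on V i UNIV g"

definition I_int :: "(real \<times> real) list \<Rightarrow> (real \<times> real) set \<Rightarrow> (real \<times> real) set \<Rightarrow> nat set" where
  "I_int V Tp Tm = {i. i < length V \<and> edge V i \<inter> Tp \<noteq> {} \<and> edge V i \<inter> Tm \<noteq> {}}"

definition I_side :: "(real \<times> real) list \<Rightarrow> (real \<times> real) set \<Rightarrow> nat set" where
  "I_side V S = {i. i < length V \<and> edge V i \<subseteq> closure S}"

definition I_bar :: "(real \<times> real) list \<Rightarrow> (real \<times> real) set \<Rightarrow> (real \<times> real) set \<Rightarrow> nat set" where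
  "I_bar V S Sother = I_side V S \<union> I_int V S Sother"

end

theory Submission
  imports Defs
begin

text \<open>
  On the element, the restriction of L(X) = n \<bullet> (X - D) to T^- equals \<sigma> min (\<sigma> L) 0, so each
  \<delta>_i is \<sigma> times the mean of min (\<cdot>) 0 along the affine interpolation between the values of
  \<sigma> L at the two ends of b_i, while the shape functions give \<gamma>_i explicitly. Edges outside
  the index set meet T^- in no point, so \<gamma>^T\<delta> becomes an explicit function of the vertex
  values of \<sigma> L (and, on rectangles, of the position of F on l).

  Exchanging T^+ and T^- negates the vertex values and turns \<gamma>^T\<delta> into 1 - \<gamma>^T\<delta> (on
  rectangles after the point reflection of the square); on rectangles \<gamma>^T\<delta> is moreover
  invariant under the symmetries of the square. This leaves, for triangles, the case of a
  single vertex in T^-, where \<gamma>^T\<delta> = x^2 / ((y - x) (z - x)) for the vertex values x < 0 \<le> y, z;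
  and for rectangles the cases where l cuts off one vertex or separates two adjacent vertices
  from the other two, each an elementary polynomial inequality.
\<close>

section \<open>Mean of the negative part of an affine function\<close>

text \<open>The closed form is the increment of the antiderivative (min x 0)^2 / 2 divided by v - u.\<close>
definition mean_min0 :: "real \<Rightarrow> real \<Rightarrow> real" where
  "mean_min0 u v =
    (if u = v then min u 0 else ((min v 0)\<^sup>2 - (min u 0)\<^sup>2) / (2 * (v - u)))"

lemma mean_min0_commute: "mean_min0 u v = mean_min0 v u"
  unfolding mean_min0_def by (auto simp: field_simps)

lemma mean_min0_nonneg: "0 \<le> u \<Longrightarrow> 0 \<le> v \<Longrightarrow> mean_min0 u v = 0"
  unfolding mean_min0_def by auto

lemma mean_min0_nonpos: "u \<le> 0 \<Longrightarrow> v \<le> 0 \<Longrightarrow> mean_min0 u v = (u + v) / 2"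
  unfolding mean_min0_def by (auto simp: field_simps power2_eq_square min_def)

lemma mean_min0_sign_change: "u \<le> 0 \<Longrightarrow> 0 \<le> v \<Longrightarrow> mean_min0 u v = - u\<^sup>2 / (2 * (v - u))"
  unfolding mean_min0_def by (auto simp: min_def)

lemma mean_min0_uminus: "mean_min0 (- u) (- v) = mean_min0 u v - (u + v) / 2"
  unfolding mean_min0_def by (auto simp: min_def field_simps power2_eq_square)

lemma mean_min0_scale: "0 < h \<Longrightarrow> mean_min0 (h * u) (h * v) = h * mean_min0 u v"
proof -
  assume h: "0 < h"
  have min_scale: "min (h * x) 0 = h * min x 0" for x
    using h by (auto simp: min_def mult_le_0_iff)
  show ?thesis
    unfolding mean_min0_def min_scale using h by (auto simp: field_simps power2_eq_square)
qed

lemma has_real_derivative_min0_square: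
  "((\<lambda>x. (min x 0)\<^sup>2 / 2) has_real_derivative min x (0::real)) (at x)"
proof (cases x "0::real" rule: linorder_cases)
  case less
  have "((\<lambda>x. x\<^sup>2 / 2) has_real_derivative min x 0) (at x)"
    using less by (auto intro!: derivative_eq_intros)
  then show ?thesis
    by (rule has_field_derivative_transform_within_open[of _ _ _ "{..<0}"]) (use less in auto)
next
  case greater
  have "((\<lambda>x. 0) has_real_derivative min x 0) (at x)"
    using greater by simp
  then show ?thesis
    by (rule has_field_derivative_transform_within_open[of _ _ _ "{0<..}"]) (use greater in auto)
next
  case equal
  have "(min z 0)\<^sup>2 / 2 - (min 0 0)\<^sup>2 / 2 = min z 0 / 2 * (z - 0)" for z :: real
    by (simp add: min_def power2_eq_square)
  moreover have "isCont (\<lambda>z. min z 0 / 2) (0::real)"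
    by (intro continuous_intros) auto
  ultimately show ?thesis
    unfolding equal CARAT_DERIV by (intro exI[of _ "\<lambda>z. min z 0 / 2"]) auto
qed

lemma integral_min0_affine:
  "integral {0..1} (\<lambda>t. min (u + t * (v - u)) 0) = mean_min0 u v"
proof (cases "u = v")
  case True
  then show ?thesis by (simp add: mean_min0_def)
next
  case False
  let ?G = "\<lambda>t. (min (u + t * (v - u)) 0)\<^sup>2 / 2 / (v - u)"
  have "(?G has_real_derivative min (u + t * (v - u)) 0) (at t)" for t
  proof -
    have "((\<lambda>t. u + t * (v - u)) has_real_derivative v - u) (at t)"
      by (auto intro!: derivative_eq_intros)
    from DERIV_cdivide[OF DERIV_chain2[OF has_real_derivative_min0_square this], of "v - u"]
    show ?thesis using False by simp
  qed
  then have "((\<lambda>t. min (u + t * (v - u)) 0) has_integral (?G 1 - ?G 0)) {0..1}"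
    by (intro fundamental_theorem_of_calculus)
      (auto simp: has_real_derivative_iff_has_vector_derivative[symmetric]
        intro: has_field_derivative_at_within)
  moreover have "?G 1 - ?G 0 = mean_min0 u v"
    using False by (simp add: mean_min0_def diff_divide_distrib)
  ultimately show ?thesis by (metis integral_unique)
qed

section \<open>The triangle case as a form in the vertex values\<close>

text \<open>h^2 \<gamma>^T\<delta> on a right triangle with legs of length h, in terms of the values a, b, c of \<sigma> L at
  the right-angle vertex and at the ends of the horizontal and the vertical leg.\<close>
definition tri_form :: "real \<Rightarrow> real \<Rightarrow> real \<Rightarrow> real" where
  "tri_form a b c =
    2 * ((mean_min0 b c - mean_min0 c a) * (b - a) + (mean_min0 b c - mean_min0 a b) * (c - a))"

lemma tri_form_commute: "tri_form a c b = tri_form a b c"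
  unfolding tri_form_def by (simp add: mean_min0_commute algebra_simps)

lemma tri_form_uminus: "tri_form (- a) (- b) (- c) = (b - a)\<^sup>2 + (c - a)\<^sup>2 - tri_form a b c"
  unfolding tri_form_def mean_min0_uminus by (simp add: field_simps power2_eq_square)

lemma tri_form_first_nonpos:
  assumes "a < 0" "0 \<le> b" "0 \<le> c"
  shows "tri_form a b c = ((b - a)\<^sup>2 + (c - a)\<^sup>2) * (a\<^sup>2 / ((b - a) * (c - a)))"
proof -
  define x y where "x = b - a" and "y = c - a"
  then have b: "b = a + x" and c: "c = a + y" and "x \<noteq> 0" "y \<noteq> 0"
    using assms by auto
  have m: "mean_min0 (a + y) a = - a\<^sup>2 / (2 * y)" "mean_min0 a (a + x) = - a\<^sup>2 / (2 * x)"
    "mean_min0 (a + x) (a + y) = 0"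
    using assms unfolding b c
    by (simp_all add: mean_min0_commute[of _ a] mean_min0_sign_change mean_min0_nonneg)
  show ?thesis
    unfolding tri_form_def b c m using \<open>x \<noteq> 0\<close> \<open>y \<noteq> 0\<close>
    by (simp add: field_simps power2_eq_square)
qed

lemma tri_form_second_nonpos:
  assumes "b < 0" "0 \<le> a" "0 \<le> c"
  shows "tri_form a b c = ((b - a)\<^sup>2 + (c - a)\<^sup>2) * (b\<^sup>2 / ((a - b) * (c - b)))"
proof -
  define x y where "x = a - b" and "y = c - b"
  then have a: "a = b + x" and c: "c = b + y" and "x \<noteq> 0" "y \<noteq> 0"
    using assms by auto
  have m: "mean_min0 b (b + y) = - b\<^sup>2 / (2 * y)" "mean_min0 (b + x) b = - b\<^sup>2 / (2 * x)"
    "mean_min0 (b + y) (b + x) = 0"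
    using assms unfolding a c
    by (simp_all add: mean_min0_commute[of _ b] mean_min0_sign_change mean_min0_nonneg)
  show ?thesis
    unfolding tri_form_def a c m using \<open>x \<noteq> 0\<close> \<open>y \<noteq> 0\<close>
    by (simp add: field_simps power2_eq_square)
qed

lemma square_div_gaps_bounds:
  fixes x y z :: real
  assumes "x < 0" "0 \<le> y" "0 \<le> z"
  shows "0 \<le> x\<^sup>2 / ((y - x) * (z - x)) \<and> x\<^sup>2 / ((y - x) * (z - x)) \<le> 1"
proof -
  have "(- x) * (- x) \<le> (y - x) * (z - x)"
    using assms by (intro mult_mono) auto
  then have "x\<^sup>2 \<le> (y - x) * (z - x)" by (simp add: power2_eq_square)
  moreover have pos: "0 < (y - x) * (z - x)" using assms by simp
  ultimately show ?thesis by (simp add: pos_divide_le_eq[OF pos] less_imp_le[OF pos])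
qed

lemma tri_form_bounds: "0 \<le> tri_form a b c \<and> tri_form a b c \<le> (b - a)\<^sup>2 + (c - a)\<^sup>2"
proof -
  have two_nonneg: "0 \<le> tri_form a b c \<and> tri_form a b c \<le> (b - a)\<^sup>2 + (c - a)\<^sup>2"
    if two: "0 \<le> a \<and> 0 \<le> b \<or> 0 \<le> a \<and> 0 \<le> c \<or> 0 \<le> b \<and> 0 \<le> c" for a b c :: real
  proof -
    have scaled: "0 \<le> N * r \<and> N * r \<le> N" if "0 \<le> N" "0 \<le> r \<and> r \<le> 1" for N r :: real
      using that by (simp add: mult_left_le)
    consider "0 \<le> a" "0 \<le> b" "0 \<le> c" | "a < 0" "0 \<le> b" "0 \<le> c"
      | "b < 0" "0 \<le> a" "0 \<le> c" | "c < 0" "0 \<le> a" "0 \<le> b"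
      using two by linarith
    then show ?thesis
    proof cases
      case 1
      then show ?thesis by (simp add: tri_form_def mean_min0_nonneg)
    next
      case 2
      show ?thesis
        unfolding tri_form_first_nonpos[OF 2]
        by (rule scaled[OF _ square_div_gaps_bounds[OF 2]]) simp
    next
      case 3
      show ?thesis
        unfolding tri_form_second_nonpos[OF 3]
        by (rule scaled[OF _ square_div_gaps_bounds[OF 3]]) simp
    next
      case 4
      show ?thesis
        unfolding tri_form_commute[symmetric, of a b c] tri_form_second_nonpos[OF 4]
          add.commute[of "(b - a)\<^sup>2"]
        by (rule scaled[OF _ square_div_gaps_bounds[OF 4]]) simp
    qed
  qed
  show ?thesis
  proof (cases "0 \<le> a \<and> 0 \<le> b \<or> 0 \<le> a \<and> 0 \<le> c \<or> 0 \<le> b \<and> 0 \<le> c")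
    case True
    then show ?thesis by (rule two_nonneg)
  next
    case False
    then have "0 \<le> tri_form (- a) (- b) (- c) \<and> tri_form (- a) (- b) (- c) \<le> (b - a)\<^sup>2 + (c - a)\<^sup>2"
      using two_nonneg[of "- a" "- b" "- c"] by (auto simp: power2_commute algebra_simps)
    then show ?thesis unfolding tri_form_uminus by simp
  qed
qed

section \<open>The rectangle case on the unit square\<close>

text \<open>\<gamma>^T\<delta> on the unit square, in terms of the values a, a + p, a + p + q, a + q of \<sigma> L at its
  corners (counterclockwise from the lower left), so that (p, q) = \<sigma> n, and of the position
  (u, w) of F. The m_i are the \<delta>_i and d is the coefficient of x^2 - y^2 in the rotated-Q1
  function with edge averages m_i.\<close>
definition rect_form :: "real \<Rightarrow> real \<Rightarrow> real \<Rightarrow> real \<Rightarrow> real \<Rightarrow> real" where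
  "rect_form a p q u w =
    (let m0 = mean_min0 a (a + p); m1 = mean_min0 (a + p) (a + p + q);
         m2 = mean_min0 (a + p + q) (a + q); m3 = mean_min0 (a + q) a;
         d = - 3 / 2 * (m0 + m2 - m1 - m3)
     in p * (m1 - m3 + d * (2 * u - 1)) + q * (m2 - m0 + d * (1 - 2 * w)))"

lemma rect_form_reflect_x: "rect_form (a + p) (- p) q (1 - u) w = rect_form a p q u w"
  unfolding rect_form_def Let_def by (simp add: mean_min0_commute field_simps)

lemma rect_form_reflect_y: "rect_form (a + q) p (- q) u (1 - w) = rect_form a p q u w"
  unfolding rect_form_def Let_def by (simp add: mean_min0_commute field_simps)

lemma rect_form_swap: "rect_form a q p w u = rect_form a p q u w"
  unfolding rect_form_def Let_def by (simp add: mean_min0_commute field_simps)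

lemma rect_form_uminus:
  "rect_form (- (a + p + q)) p q (1 - u) (1 - w) = p\<^sup>2 + q\<^sup>2 - rect_form a p q u w"
proof -
  have args: "- (a + p + q) + p = - (a + q)" "- (a + q) + q = - a"
    "- (a + p + q) + q = - (a + p)"
    by simp_all
  show ?thesis
    unfolding rect_form_def Let_def
    by (simp only: args mean_min0_uminus) (simp add: field_simps power2_eq_square)
qed

lemma rect_form_nonneg_corners:
  assumes "0 \<le> a" "0 \<le> p" "0 \<le> q"
  shows "rect_form a p q u w = 0"
  using assms unfolding rect_form_def Let_def by (simp add: mean_min0_nonneg)

lemma corner_quotient_bounds:
  fixes p q s X Y :: real
  assumes p: "0 < p" and pq: "p \<le> q" and s: "0 \<le> s" "s \<le> p"
    and XY: "0 \<le> X" "0 \<le> Y" "X + Y = s" and pq_unit: "p\<^sup>2 + q\<^sup>2 = 1"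
  defines "Q \<equiv> s\<^sup>2 * (2 * (p\<^sup>2 + q\<^sup>2) + 3 * (q - p) * (q - p + 2 * X - 2 * Y)) / (4 * p * q)"
  shows "0 \<le> Q \<and> Q \<le> 1"
proof -
  define K where "K = q - p + 2 * X - 2 * Y"
  have qp: "0 \<le> q - p" using pq by simp
  have "(q - p) * (q - 3 * p) \<le> (q - p) * K"
    unfolding K_def using qp XY s by (intro mult_left_mono) auto
  moreover have "2 * (p\<^sup>2 + q\<^sup>2) + 3 * ((q - p) * (q - 3 * p))
      = 5 * (q - 6 / 5 * p)\<^sup>2 + 19 / 5 * p\<^sup>2"
    by (simp add: power2_eq_square algebra_simps)
  moreover have "0 \<le> 5 * (q - 6 / 5 * p)\<^sup>2 + 19 / 5 * p\<^sup>2" by simp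
  ultimately have lo: "0 \<le> 2 * (p\<^sup>2 + q\<^sup>2) + 3 * (q - p) * K" by linarith
  have "(q - p) * K \<le> (q - p) * (q - p + 2 * p)"
    unfolding K_def using qp XY s by (intro mult_left_mono) auto
  then have "2 * (p\<^sup>2 + q\<^sup>2) + 3 * (q - p) * K \<le> 5 * q\<^sup>2 - p\<^sup>2"
    using pq_unit by (simp add: power2_eq_square algebra_simps)
  then have "s\<^sup>2 * (2 * (p\<^sup>2 + q\<^sup>2) + 3 * (q - p) * K) \<le> s\<^sup>2 * (5 * q\<^sup>2 - p\<^sup>2)"
    by (simp add: mult_left_mono)
  also have "\<dots> \<le> p\<^sup>2 * (5 * q\<^sup>2 - p\<^sup>2)"
  proof (rule mult_right_mono)
    show "s\<^sup>2 \<le> p\<^sup>2" using s by (simp add: power_mono)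
    have "p\<^sup>2 \<le> q\<^sup>2" using p pq by (simp add: power_mono)
    moreover have "0 \<le> q\<^sup>2" by simp
    ultimately show "0 \<le> 5 * q\<^sup>2 - p\<^sup>2" by linarith
  qed
  also have "\<dots> \<le> 4 * p * q"
  proof -
    define t where "t = q - p"
    have "4 * q * (p\<^sup>2 + q\<^sup>2) - p * (5 * q\<^sup>2 - p\<^sup>2)
        = 4 * p ^ 3 + 6 * p\<^sup>2 * t + 7 * p * t\<^sup>2 + 4 * t ^ 3"
      unfolding t_def by (simp add: power2_eq_square power3_eq_cube algebra_simps)
    moreover have "0 \<le> 4 * p ^ 3 + 6 * p\<^sup>2 * t + 7 * p * t\<^sup>2 + 4 * t ^ 3"
      using p qp unfolding t_def by simp
    ultimately have "p * (5 * q\<^sup>2 - p\<^sup>2) \<le> 4 * q" using pq_unit by simp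
    from mult_left_mono[OF this, of p] p show ?thesis
      by (simp add: power2_eq_square algebra_simps)
  qed
  finally have hi: "s\<^sup>2 * (2 * (p\<^sup>2 + q\<^sup>2) + 3 * (q - p) * K) \<le> 4 * p * q" .
  have "0 < 4 * p * q" using p pq by simp
  with lo hi show ?thesis
    unfolding Q_def K_def[symmetric] by (simp add: divide_le_eq_1)
qed

lemma rect_form_one_corner_bounds:
  assumes pq: "p \<le> q" and pq_unit: "p\<^sup>2 + q\<^sup>2 = 1" and u: "0 \<le> u" "u \<le> 1"
    and w: "0 \<le> w" "w \<le> 1" and line: "a + p * u + q * w = 0" and a: "a < 0" "0 \<le> a + p"
  shows "0 \<le> rect_form a p q u w \<and> rect_form a p q u w \<le> 1"
proof -
  have p: "0 < p" and q: "0 < q" using a pq by linarith+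
  have m: "mean_min0 a (a + p) = - a\<^sup>2 / (2 * p)" "mean_min0 (a + p) (a + p + q) = 0"
    "mean_min0 (a + p + q) (a + q) = 0" "mean_min0 (a + q) a = - a\<^sup>2 / (2 * q)"
    using a q pq
    by (simp_all add: mean_min0_sign_change mean_min0_nonneg mean_min0_commute[of "a + q"])
  have "rect_form a p q u w
      = (- a)\<^sup>2 * (2 * (p\<^sup>2 + q\<^sup>2) + 3 * (q - p) * (q - p + 2 * (p * u) - 2 * (q * w)))
        / (4 * p * q)"
    unfolding rect_form_def Let_def m using p q by (simp add: field_simps power2_eq_square)
  also have "0 \<le> \<dots> \<and> \<dots> \<le> 1"
    using a u w line p q by (intro corner_quotient_bounds[OF p pq _ _ _ _ _ pq_unit]) auto
  finally show ?thesis .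
qed

lemma rect_form_two_corners_bounds:
  assumes p: "0 \<le> p" and pq_unit: "p\<^sup>2 + q\<^sup>2 = 1" and u: "0 \<le> u" "u \<le> 1"
    and line: "a + p * u + q * w = 0" and a: "a + p < 0" "0 \<le> a + q"
  shows "0 \<le> rect_form a p q u w \<and> rect_form a p q u w \<le> 1"
proof -
  define x y where "x = - (a + p)" and "y = a + q"
  have x: "0 < x" and y: "0 \<le> y" and q_eq: "q = p + x + y" using a by (auto simp: x_def y_def)
  have q: "0 < q" using q_eq p x y by linarith
  have m: "mean_min0 a (a + p) = (a + (a + p)) / 2"
    "mean_min0 (a + p) (a + p + q) = - (a + p)\<^sup>2 / (2 * q)"
    "mean_min0 (a + p + q) (a + q) = 0" "mean_min0 (a + q) a = - a\<^sup>2 / (2 * q)"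
    using a p
    by (simp_all add: mean_min0_nonpos mean_min0_sign_change mean_min0_nonneg
        mean_min0_commute[of "a + q"])
  define E where "E = p * (x + y) + 2 * x * y"
  have E: "0 \<le> E" unfolding E_def using p x y by simp
  have w_eq: "w = - (a + p * u) / q" using line q by (simp add: field_simps)
  define R where "R = 4 * (p / 2 + x) * (p\<^sup>2 + q\<^sup>2) + 3 * E * (y - x + 2 * p * (2 * u - 1))"
  have e: "4 * q * rect_form a p q u w = R"
    unfolding rect_form_def Let_def m R_def E_def x_def y_def w_eq using q
    by (simp add: field_simps power2_eq_square)
  have "R = 7 * p * x\<^sup>2 + p * (5 * (y - p / 5)\<^sup>2 + 19 / 5 * p\<^sup>2) + 6 * p\<^sup>2 * x
      + 10 * x * y\<^sup>2 + 2 * x\<^sup>2 * y + 4 * x ^ 3 + 12 * p * E * u"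
    unfolding R_def q_eq E_def by (simp add: algebra_simps power2_eq_square power3_eq_cube)
  then have lo: "0 \<le> 4 * q * rect_form a p q u w"
    unfolding e using p x y E u by simp
  have "4 * q * (p\<^sup>2 + q\<^sup>2) - R = 7 * p * y\<^sup>2 + p * (5 * (x - p / 5)\<^sup>2 + 19 / 5 * p\<^sup>2) + 6 * p\<^sup>2 * y
      + 10 * x\<^sup>2 * y + 2 * x * y\<^sup>2 + 4 * y ^ 3 + 12 * p * E * (1 - u)"
    unfolding R_def q_eq E_def by (simp add: algebra_simps power2_eq_square power3_eq_cube)
  then have hi: "0 \<le> 4 * q - 4 * q * rect_form a p q u w"
    unfolding e pq_unit using p x y E u by simp
  from lo hi q show ?thesis
    by (simp add: zero_le_mult_iff mult_le_cancel_left1 mult.assoc)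
qed

lemma rect_form_bounds_ordered:
  assumes p: "0 \<le> p" and pq: "p \<le> q" and pq_unit: "p\<^sup>2 + q\<^sup>2 = 1"
    and u: "0 \<le> u" "u \<le> 1" and w: "0 \<le> w" "w \<le> 1" and line: "a + p * u + q * w = 0"
  shows "0 \<le> rect_form a p q u w \<and> rect_form a p q u w \<le> 1"
proof -
  have upper: "0 \<le> rect_form a p q u w \<and> rect_form a p q u w \<le> 1"
    if "0 \<le> a + p" "0 \<le> u" "u \<le> 1" "0 \<le> w" "w \<le> 1" "a + p * u + q * w = 0" for a u w
  proof (cases "0 \<le> a")
    case True
    then show ?thesis using p pq by (simp add: rect_form_nonneg_corners)
  next
    case False
    then show ?thesis using that by (intro rect_form_one_corner_bounds[OF pq pq_unit]) auto
  qed
  consider "0 \<le> a + p" | "a + p < 0" "0 \<le> a + q" | "a + q < 0" by linarith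
  then show ?thesis
  proof cases
    case 1
    then show ?thesis using u w line by (rule upper)
  next
    case 2
    then show ?thesis using p pq_unit u line by (intro rect_form_two_corners_bounds)
  next
    case 3
    have "0 \<le> rect_form (- (a + p + q)) p q (1 - u) (1 - w)
        \<and> rect_form (- (a + p + q)) p q (1 - u) (1 - w) \<le> 1"
      using 3 u w line pq by (intro upper) (auto simp: algebra_simps)
    then show ?thesis unfolding rect_form_uminus pq_unit by linarith
  qed
qed

lemma rect_form_bounds_nonneg:
  assumes "0 \<le> p" "0 \<le> q" "p\<^sup>2 + q\<^sup>2 = 1" "0 \<le> u" "u \<le> 1" "0 \<le> w" "w \<le> 1"
    and "a + p * u + q * w = 0"
  shows "0 \<le> rect_form a p q u w \<and> rect_form a p q u w \<le> 1"
proof (cases "p \<le> q")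
  case True
  then show ?thesis using assms by (intro rect_form_bounds_ordered)
next
  case False
  then have "0 \<le> rect_form a q p w u \<and> rect_form a q p w u \<le> 1"
    using assms by (intro rect_form_bounds_ordered) (auto simp: algebra_simps)
  then show ?thesis by (simp add: rect_form_swap)
qed

lemma rect_form_bounds:
  assumes pq_unit: "p\<^sup>2 + q\<^sup>2 = 1" and u: "0 \<le> u" "u \<le> 1" and w: "0 \<le> w" "w \<le> 1"
    and line: "a + p * u + q * w = 0"
  shows "0 \<le> rect_form a p q u w \<and> rect_form a p q u w \<le> 1"
proof -
  have q_nonneg: "0 \<le> rect_form a p q u w \<and> rect_form a p q u w \<le> 1"
    if "0 \<le> q" "p\<^sup>2 + q\<^sup>2 = 1" "0 \<le> w" "w \<le> 1" "a + p * u + q * w = 0" for a q w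
  proof (cases "0 \<le> p")
    case True
    then show ?thesis using that u by (intro rect_form_bounds_nonneg)
  next
    case False
    then have "0 \<le> rect_form (a + p) (- p) q (1 - u) w \<and> rect_form (a + p) (- p) q (1 - u) w \<le> 1"
      using that u by (intro rect_form_bounds_nonneg) (auto simp: algebra_simps)
    then show ?thesis by (simp add: rect_form_reflect_x)
  qed
  show ?thesis
  proof (cases "0 \<le> q")
    case True
    then show ?thesis using pq_unit w line by (rule q_nonneg)
  next
    case False
    then have "0 \<le> rect_form (a + q) p (- q) u (1 - w) \<and> rect_form (a + q) p (- q) u (1 - w) \<le> 1"
      using pq_unit w line by (intro q_nonneg) (auto simp: algebra_simps)
    then show ?thesis by (simp add: rect_form_reflect_y)
  qed
qed

section \<open>Edge averages and gradients of the local functions\<close>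

lemma integral_quadratic_01:
  "integral {0..1} (\<lambda>t. \<alpha> + \<beta> * t + \<gamma> * t\<^sup>2) = \<alpha> + \<beta> / 2 + (\<gamma> :: real) / 3"
proof -
  have "((\<lambda>t. \<alpha> + \<beta> * t + \<gamma> * t\<^sup>2) has_integral
      ((\<alpha> * 1 + \<beta> * 1\<^sup>2 / 2 + \<gamma> * 1 ^ 3 / 3) - (\<alpha> * 0 + \<beta> * 0\<^sup>2 / 2 + \<gamma> * 0 ^ 3 / 3))) {0..1}"
    by (intro fundamental_theorem_of_calculus)
      (auto simp: has_real_derivative_iff_has_vector_derivative[symmetric] power2_eq_square
        intro!: derivative_eq_intros)
  then show ?thesis by (simp add: integral_unique)
qed

lemma integral_RQ1_segment:
  fixes A B :: "real \<times> real"
  defines "X t \<equiv> A + t *\<^sub>R (B - A)"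
  shows "integral {0..1}
      (\<lambda>t. a + b * fst (X t) + c * snd (X t) + d * ((fst (X t))\<^sup>2 - (snd (X t))\<^sup>2))
    = a + b * (fst A + fst B) / 2 + c * (snd A + snd B) / 2
      + d * (((fst A)\<^sup>2 + fst A * fst B + (fst B)\<^sup>2) / 3
        - ((snd A)\<^sup>2 + snd A * snd B + (snd B)\<^sup>2) / 3)"
proof -
  obtain A1 A2 B1 B2 where AB: "A = (A1, A2)" "B = (B1, B2)" by (cases A, cases B)
  let ?\<alpha> = "a + b * A1 + c * A2 + d * (A1\<^sup>2 - A2\<^sup>2)"
  let ?\<beta> = "b * (B1 - A1) + c * (B2 - A2) + d * (2 * A1 * (B1 - A1) - 2 * A2 * (B2 - A2))"
  let ?\<gamma> = "d * ((B1 - A1)\<^sup>2 - (B2 - A2)\<^sup>2)"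
  have "integral {0..1}
      (\<lambda>t. a + b * fst (X t) + c * snd (X t) + d * ((fst (X t))\<^sup>2 - (snd (X t))\<^sup>2))
      = integral {0..1} (\<lambda>t. ?\<alpha> + ?\<beta> * t + ?\<gamma> * t\<^sup>2)"
    unfolding X_def AB by (intro integral_cong) (simp add: algebra_simps power2_eq_square)
  also have "\<dots> = ?\<alpha> + ?\<beta> / 2 + ?\<gamma> / 3"
    by (rule integral_quadratic_01)
  finally show ?thesis unfolding AB by (simp add: field_simps power2_eq_square)
qed

lemma edge_avg_RQ1:
  fixes V :: "(real \<times> real) list" and j :: nat
  assumes "\<forall>X. f X = a + b * fst X + c * snd X + d * ((fst X)\<^sup>2 - (snd X)\<^sup>2)"
  defines "A \<equiv> V ! j" and "B \<equiv> V ! ((j + 1) mod length V)"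
  shows "edge_avg V j f = a + b * (fst A + fst B) / 2 + c * (snd A + snd B) / 2
      + d * (((fst A)\<^sup>2 + fst A * fst B + (fst B)\<^sup>2) / 3
        - ((snd A)\<^sup>2 + snd A * snd B + (snd B)\<^sup>2) / 3)"
proof -
  have "f = (\<lambda>X. a + b * fst X + c * snd X + d * ((fst X)\<^sup>2 - (snd X)\<^sup>2))"
    using assms(1) by auto
  then show ?thesis
    unfolding edge_avg_def edge_avg_on_def edge_pt_def A_def B_def
    using integral_RQ1_segment[where A = A and B = B and a = a and b = b and c = c and d = d]
    by (simp add: A_def B_def)
qed

lemma grad_RQ1:
  assumes "\<forall>X. f X = a + b * fst X + c * snd X + d * ((fst X)\<^sup>2 - (snd X)\<^sup>2)"
  shows "grad f X = (b + 2 * d * fst X, c - 2 * d * snd X)"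
proof -
  have f: "f = (\<lambda>X. a + b * fst X + c * snd X + d * ((fst X)\<^sup>2 - (snd X)\<^sup>2))"
    using assms by auto
  have "deriv (\<lambda>t. a + b * t + c * snd X + d * (t\<^sup>2 - (snd X)\<^sup>2)) (fst X) = b + 2 * d * fst X"
    "deriv (\<lambda>t. a + b * fst X + c * t + d * ((fst X)\<^sup>2 - t\<^sup>2)) (snd X) = c - 2 * d * snd X"
    by (rule DERIV_imp_deriv; auto intro!: derivative_eq_intros)+
  then show ?thesis unfolding grad_def f by simp
qed

lemma grad_CR_triangle:
  assumes V: "V = [P, P + (s1 * h, 0), P + (0, s2 * h)]" and s: "s1 \<in> {-1, 1}" "s2 \<in> {-1, 1}"
    and h: "0 < h" and f: "f \<in> CR_space"
  shows "grad f X = (2 * s1 * (edge_avg V 1 f - edge_avg V 2 f) / h,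
                     2 * s2 * (edge_avg V 1 f - edge_avg V 0 f) / h)"
proof -
  obtain a b c where abc: "\<forall>X. f X = a + b * fst X + c * snd X"
    using f unfolding CR_space_def by auto
  then have RQ1: "\<forall>X. f X = a + b * fst X + c * snd X + 0 * ((fst X)\<^sup>2 - (snd X)\<^sup>2)" by simp
  have avg: "edge_avg V 0 f = a + b * (fst P + s1 * h / 2) + c * snd P"
    "edge_avg V 1 f = a + b * (fst P + s1 * h / 2) + c * (snd P + s2 * h / 2)"
    "edge_avg V 2 f = a + b * fst P + c * (snd P + s2 * h / 2)"
    using edge_avg_RQ1[OF RQ1, of V 0] edge_avg_RQ1[OF RQ1, of V 1] edge_avg_RQ1[OF RQ1, of V 2] V
    by (simp_all add: field_simps)
  have "s1 * s1 = 1" "s2 * s2 = 1" using s by auto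
  then have "b = 2 * s1 * (edge_avg V 1 f - edge_avg V 2 f) / h"
    "c = 2 * s2 * (edge_avg V 1 f - edge_avg V 0 f) / h"
    unfolding avg using h by (simp_all add: field_simps)
  then show ?thesis using grad_RQ1[OF RQ1] by simp
qed

lemma grad_RQ1_rectangle:
  assumes V: "V = [(x0, y0), (x0 + h, y0), (x0 + h, y0 + h), (x0, y0 + h)]" and h: "0 < h"
    and f: "f \<in> RQ1_space"
  defines "e \<equiv> \<lambda>j. edge_avg V j f"
  defines "k \<equiv> - 3 * (e 0 + e 2 - e 1 - e 3) / (2 * h\<^sup>2)"
  shows "grad f X = ((e 1 - e 3) / h + k * (2 * (fst X - x0) - h),
                     (e 2 - e 0) / h + k * (h - 2 * (snd X - y0)))"
proof -
  obtain a b c d where abcd: "\<forall>X. f X = a + b * fst X + c * snd X + d * ((fst X)\<^sup>2 - (snd X)\<^sup>2)"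
    using f unfolding RQ1_space_def by auto
  define X2 Y2 where "X2 = (x0\<^sup>2 + x0 * (x0 + h) + (x0 + h)\<^sup>2) / 3"
    and "Y2 = (y0\<^sup>2 + y0 * (y0 + h) + (y0 + h)\<^sup>2) / 3"
  have e: "e 0 = a + b * (x0 + h / 2) + c * y0 + d * (X2 - y0\<^sup>2)"
    "e 1 = a + b * (x0 + h) + c * (y0 + h / 2) + d * ((x0 + h)\<^sup>2 - Y2)"
    "e 2 = a + b * (x0 + h / 2) + c * (y0 + h) + d * (X2 - (y0 + h)\<^sup>2)"
    "e 3 = a + b * x0 + c * (y0 + h / 2) + d * (x0\<^sup>2 - Y2)"
    unfolding e_def X2_def Y2_def using edge_avg_RQ1[OF abcd, of V 0] edge_avg_RQ1[OF abcd, of V 1]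
      edge_avg_RQ1[OF abcd, of V 2] edge_avg_RQ1[OF abcd, of V 3] V
    by (simp_all add: field_simps power2_eq_square)
  have "k = d" unfolding k_def e X2_def Y2_def using h by (simp add: field_simps power2_eq_square)
  moreover have "e 1 - e 3 = b * h + d * (2 * x0 * h + h\<^sup>2)"
    "e 2 - e 0 = c * h - d * (2 * y0 * h + h\<^sup>2)"
    unfolding e by (simp_all add: field_simps power2_eq_square)
  ultimately show ?thesis
    using grad_RQ1[OF abcd] h by (simp add: field_simps power2_eq_square)
qed

section \<open>The quantity \<gamma>^T\<delta> on an interface element\<close>

lemma convex_elem: "convex (elem V)"
  unfolding elem_def by simp

lemma vertex_in_elem: "i < length V \<Longrightarrow> V ! i \<in> elem V"
  unfolding elem_def by (intro hull_inc nth_mem)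

lemma next_vertex_in_elem: "i < length V \<Longrightarrow> V ! ((i + 1) mod length V) \<in> elem V"
  by (intro vertex_in_elem mod_less_divisor) linarith

lemma edge_subset_elem: "i < length V \<Longrightarrow> edge V i \<subseteq> elem V"
  unfolding edge_def
  by (intro closed_segment_subset convex_elem vertex_in_elem next_vertex_in_elem)

lemma edge_pt_in_edge: "t \<in> {0..1} \<Longrightarrow> edge_pt V i t \<in> edge V i"
proof -
  assume t: "t \<in> {0..1}"
  have "edge_pt V i t = (1 - t) *\<^sub>R V ! i + t *\<^sub>R V ! ((i + 1) mod length V)"
    unfolding edge_pt_def by (simp add: algebra_simps)
  then show ?thesis unfolding edge_def in_segment(1) using t by auto
qed

lemma edge_avg_on_eq_0:
  assumes "edge V i \<inter> S = {}"
  shows "edge_avg_on V i S g = 0"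
proof -
  have "indicator S (edge_pt V i t) * g (edge_pt V i t) = 0" if "t \<in> {0..1}" for t
    using edge_pt_in_edge[OF that, of V i] assms by (auto simp: indicator_def)
  then have "edge_avg_on V i S g = integral {0..1} (\<lambda>t::real. 0::real)"
    unfolding edge_avg_on_def by (rule integral_cong)
  then show ?thesis by simp
qed

lemma edge_avg_on_level_side:
  assumes j: "j < length V" and \<sigma>: "\<sigma> \<in> {-1, 1}"
    and Tm: "Tm = {X \<in> elem V. \<sigma> * (n \<bullet> (X - D)) < 0}"
  shows "edge_avg_on V j Tm (\<lambda>X. n \<bullet> (X - D))
    = \<sigma> * mean_min0 (\<sigma> * (n \<bullet> (V ! j - D))) (\<sigma> * (n \<bullet> (V ! ((j + 1) mod length V) - D)))"
proof -
  let ?A = "V ! j" and ?B = "V ! ((j + 1) mod length V)"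
  let ?u = "\<sigma> * (n \<bullet> (?A - D))" and ?v = "\<sigma> * (n \<bullet> (?B - D))"
  have "indicator Tm (edge_pt V j t) * (n \<bullet> (edge_pt V j t - D)) = \<sigma> * min (?u + t * (?v - ?u)) 0"
    if t: "t \<in> {0..1}" for t
  proof -
    have "edge_pt V j t \<in> elem V"
      using edge_pt_in_edge[OF t] edge_subset_elem[OF j] by blast
    moreover have "?u + t * (?v - ?u) = \<sigma> * (n \<bullet> (edge_pt V j t - D))"
      unfolding edge_pt_def by (simp add: inner_diff_right inner_add_right algebra_simps)
    ultimately show ?thesis
      using \<sigma> unfolding Tm by (auto simp: indicator_def min_def algebra_simps)
  qed
  then have "edge_avg_on V j Tm (\<lambda>X. n \<bullet> (X - D))
      = integral {0..1} (\<lambda>t. \<sigma> * min (?u + t * (?v - ?u)) 0)"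
    unfolding edge_avg_on_def by (intro integral_cong) auto
  also have "\<dots> = \<sigma> * mean_min0 ?u ?v"
    by (simp add: integral_min0_affine)
  finally show ?thesis .
qed

lemma open_segment_subset_side:
  assumes Tm: "Tm = {X \<in> elem V. \<sigma> * (n \<bullet> (X - D)) < 0}"
    and Y: "Y \<in> elem V" "\<sigma> * (n \<bullet> (Y - D)) \<le> 0" and X: "X \<in> Tm"
  shows "open_segment Y X \<subseteq> Tm"
proof
  fix Z assume "Z \<in> open_segment Y X"
  then obtain s where s: "0 < s" "s < 1" and Z: "Z = (1 - s) *\<^sub>R Y + s *\<^sub>R X"
    unfolding in_segment(2) by auto
  have "Z \<in> elem V"
    unfolding Z using convex_elem Y X s unfolding Tm by (intro convexD) auto
  moreover have "\<sigma> * (n \<bullet> (Z - D)) = (1 - s) * (\<sigma> * (n \<bullet> (Y - D))) + s * (\<sigma> * (n \<bullet> (X - D)))"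
    unfolding Z by (simp add: inner_diff_right inner_add_right algebra_simps)
  moreover have "(1 - s) * (\<sigma> * (n \<bullet> (Y - D))) \<le> 0" "s * (\<sigma> * (n \<bullet> (X - D))) < 0"
    using s Y X unfolding Tm by (auto simp: mult_nonneg_nonpos mult_pos_neg)
  ultimately show "Z \<in> Tm" unfolding Tm by auto
qed

lemma edge_meets_side_imp_I_bar:
  assumes i: "i < length V" and meets: "edge V i \<inter> Tm \<noteq> {}"
    and Tm: "Tm = {X \<in> elem V. \<sigma> * (n \<bullet> (X - D)) < 0}"
    and Tp: "Tp = {X \<in> elem V. \<sigma> * (n \<bullet> (X - D)) > 0}"
  shows "i \<in> I_bar V Tm Tp"
proof (rule ccontr)
  assume not_bar: "i \<notin> I_bar V Tm Tp"
  obtain X where X: "X \<in> edge V i" "X \<in> Tm" using meets by auto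
  have "edge V i \<subseteq> closure Tm"
  proof
    fix Y assume Y: "Y \<in> edge V i"
    then have Y_elem: "Y \<in> elem V" using edge_subset_elem[OF i] by blast
    have "Y \<notin> Tp" using not_bar i X Y unfolding I_bar_def I_int_def by auto
    then have "\<sigma> * (n \<bullet> (Y - D)) \<le> 0" using Y_elem unfolding Tp by auto
    then have "closure (open_segment Y X) \<subseteq> closure Tm"
      by (intro closure_mono open_segment_subset_side[OF Tm Y_elem _ X(2)])
    then show "Y \<in> closure Tm"
      using X(2) closure_subset by (cases "Y = X") auto
  qed
  with not_bar i show False unfolding I_bar_def I_side_def by auto
qed

definition gamma_delta ::
  "(real \<times> real) list \<Rightarrow> (nat \<Rightarrow> real \<times> real \<Rightarrow> real) \<Rightarrow> (real \<times> real) set \<Rightarrow> (real \<times> real) set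
    \<Rightarrow> real \<times> real \<Rightarrow> real \<times> real \<Rightarrow> real \<times> real \<Rightarrow> real" where
  "gamma_delta V \<psi> Tm Tp D n F =
    (\<Sum>i \<in> I_bar V Tm Tp. (grad (\<psi> i) F \<bullet> n) * edge_avg_on V i Tm (\<lambda>X. n \<bullet> (X - D)))"

lemma gamma_delta_eq_sum_edges:
  assumes Tm: "Tm = {X \<in> elem V. \<sigma> * (n \<bullet> (X - D)) < 0}"
    and Tp: "Tp = {X \<in> elem V. \<sigma> * (n \<bullet> (X - D)) > 0}"
  shows "gamma_delta V \<psi> Tm Tp D n F
    = (\<Sum>i < length V. (grad (\<psi> i) F \<bullet> n) * edge_avg_on V i Tm (\<lambda>X. n \<bullet> (X - D)))"
  unfolding gamma_delta_def
proof (rule sum.mono_neutral_left)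
  show "I_bar V Tm Tp \<subseteq> {..<length V}"
    unfolding I_bar_def I_side_def I_int_def by auto
  show "\<forall>i \<in> {..<length V} - I_bar V Tm Tp.
      (grad (\<psi> i) F \<bullet> n) * edge_avg_on V i Tm (\<lambda>X. n \<bullet> (X - D)) = 0"
  proof
    fix i assume i: "i \<in> {..<length V} - I_bar V Tm Tp"
    then have "edge V i \<inter> Tm = {}"
      using edge_meets_side_imp_I_bar[OF _ _ Tm Tp, of i] by auto
    then show "(grad (\<psi> i) F \<bullet> n) * edge_avg_on V i Tm (\<lambda>X. n \<bullet> (X - D)) = 0"
      by (simp add: edge_avg_on_eq_0)
  qed
qed simp

lemma gamma_delta_triangle:
  assumes h: "0 < h" and V: "V = [P, P + (s1 * h, 0), P + (0, s2 * h)]"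
    and s: "s1 \<in> {-1, 1}" "s2 \<in> {-1, 1}"
    and shape: "\<forall>i < length V. \<psi> i \<in> CR_space \<and>
                  (\<forall>j < length V. edge_avg V j (\<psi> i) = (if i = j then 1 else 0))"
    and \<sigma>: "\<sigma> \<in> {-1, 1}"
    and Tm: "Tm = {X \<in> elem V. \<sigma> * (n \<bullet> (X - D)) < 0}"
    and Tp: "Tp = {X \<in> elem V. \<sigma> * (n \<bullet> (X - D)) > 0}"
  defines "a \<equiv> \<sigma> * (n \<bullet> (P - D))" and "b \<equiv> \<sigma> * (n \<bullet> (P + (s1 * h, 0) - D))"
    and "c \<equiv> \<sigma> * (n \<bullet> (P + (0, s2 * h) - D))"
  shows "h\<^sup>2 * gamma_delta V \<psi> Tm Tp D n F = tri_form a b c"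
proof -
  obtain n1 n2 where n: "n = (n1, n2)" by (cases n)
  have len: "length V = 3" using V by simp
  have CR: "\<psi> i \<in> CR_space" if "i < 3" for i
    using shape that len by auto
  have avg: "edge_avg V j (\<psi> i) = (if i = j then 1 else 0)" if "i < 3" "j < 3" for i j
    using shape that len by auto
  have grad: "grad (\<psi> 0) F = (0, - 2 * s2 / h)" "grad (\<psi> 1) F = (2 * s1 / h, 2 * s2 / h)"
    "grad (\<psi> 2) F = (- 2 * s1 / h, 0)"
    using grad_CR_triangle[OF V s h CR[of 0]] grad_CR_triangle[OF V s h CR[of 1]]
      grad_CR_triangle[OF V s h CR[of 2]]
    by (simp_all add: avg)
  have \<delta>: "edge_avg_on V 0 Tm (\<lambda>X. n \<bullet> (X - D)) = \<sigma> * mean_min0 a b"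
    "edge_avg_on V 1 Tm (\<lambda>X. n \<bullet> (X - D)) = \<sigma> * mean_min0 b c"
    "edge_avg_on V 2 Tm (\<lambda>X. n \<bullet> (X - D)) = \<sigma> * mean_min0 c a"
    using edge_avg_on_level_side[OF _ \<sigma> Tm, of 0] edge_avg_on_level_side[OF _ \<sigma> Tm, of 1]
      edge_avg_on_level_side[OF _ \<sigma> Tm, of 2]
    unfolding a_def b_def c_def by (simp_all add: V)
  have S: "gamma_delta V \<psi> Tm Tp D n F = (grad (\<psi> 0) F \<bullet> n) * (\<sigma> * mean_min0 a b)
      + (grad (\<psi> 1) F \<bullet> n) * (\<sigma> * mean_min0 b c) + (grad (\<psi> 2) F \<bullet> n) * (\<sigma> * mean_min0 c a)"
  proof -
    have "{..<3::nat} = {0, 1, 2}" by auto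
    then show ?thesis unfolding gamma_delta_eq_sum_edges[OF Tm Tp] len using \<delta> by simp
  qed
  have sides: "b - a = \<sigma> * s1 * h * n1" "c - a = \<sigma> * s2 * h * n2"
    unfolding a_def b_def c_def n by (simp_all add: inner_diff_right algebra_simps)
  show ?thesis
    unfolding S unfolding tri_form_def sides grad n
    using h by (simp add: field_simps power2_eq_square)
qed

lemma norm_unit_pair: "norm (n :: real \<times> real) = 1 \<Longrightarrow> (fst n)\<^sup>2 + (snd n)\<^sup>2 = 1"
  by (cases n) (simp add: norm_Pair)

lemma gamma_delta_triangle_bounds:
  assumes h: "0 < h" and V: "V \<in> cart_triangles h"
    and shape: "\<forall>i < length V. \<psi> i \<in> CR_space \<and>
                  (\<forall>j < length V. edge_avg V j (\<psi> i) = (if i = j then 1 else 0))"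
    and n: "norm n = 1" and \<sigma>: "\<sigma> \<in> {-1, 1}"
    and Tm: "Tm = {X \<in> elem V. \<sigma> * (n \<bullet> (X - D)) < 0}"
    and Tp: "Tp = {X \<in> elem V. \<sigma> * (n \<bullet> (X - D)) > 0}"
  shows "0 \<le> gamma_delta V \<psi> Tm Tp D n F \<and> gamma_delta V \<psi> Tm Tp D n F \<le> 1"
proof -
  obtain P s1 s2 where V: "V = [P, P + (s1 * h, 0), P + (0, s2 * h)]"
    and s: "s1 \<in> {-1, 1}" "s2 \<in> {-1, 1}"
    using V unfolding cart_triangles_def by blast
  define a b c where "a = \<sigma> * (n \<bullet> (P - D))" and "b = \<sigma> * (n \<bullet> (P + (s1 * h, 0) - D))"
    and "c = \<sigma> * (n \<bullet> (P + (0, s2 * h) - D))"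
  have "(b - a)\<^sup>2 + (c - a)\<^sup>2 = (\<sigma> * \<sigma>) * h\<^sup>2 * ((s1 * s1) * (fst n)\<^sup>2 + (s2 * s2) * (snd n)\<^sup>2)"
    unfolding a_def b_def c_def
    by (cases n) (simp add: inner_diff_right power2_eq_square algebra_simps)
  also have "\<dots> = h\<^sup>2" using \<sigma> s norm_unit_pair[OF n] by auto
  finally have "0 \<le> h\<^sup>2 * gamma_delta V \<psi> Tm Tp D n F \<and> h\<^sup>2 * gamma_delta V \<psi> Tm Tp D n F \<le> h\<^sup>2"
    using tri_form_bounds[of a b c] gamma_delta_triangle[OF h V s shape \<sigma> Tm Tp]
    unfolding a_def b_def c_def by simp
  then show ?thesis using h by (simp add: zero_le_mult_iff)
qed

lemma gamma_delta_rectangle: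
  assumes h: "0 < h" and V: "V = [(x0, y0), (x0 + h, y0), (x0 + h, y0 + h), (x0, y0 + h)]"
    and shape: "\<forall>i < length V. \<psi> i \<in> RQ1_space \<and>
                  (\<forall>j < length V. edge_avg V j (\<psi> i) = (if i = j then 1 else 0))"
    and \<sigma>: "\<sigma> \<in> {-1, 1}"
    and Tm: "Tm = {X \<in> elem V. \<sigma> * (n \<bullet> (X - D)) < 0}"
    and Tp: "Tp = {X \<in> elem V. \<sigma> * (n \<bullet> (X - D)) > 0}"
  defines "a \<equiv> \<sigma> * (n \<bullet> ((x0, y0) - D))" and "p \<equiv> \<sigma> * fst n" and "q \<equiv> \<sigma> * snd n"
  shows "gamma_delta V \<psi> Tm Tp D n F
    = rect_form (a / h) p q ((fst F - x0) / h) ((snd F - y0) / h)"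
proof -
  obtain n1 n2 where n: "n = (n1, n2)" by (cases n)
  have len: "length V = 4" using V by simp
  have RQ1: "\<psi> i \<in> RQ1_space" if "i < 4" for i
    using shape that len by auto
  have avg: "edge_avg V j (\<psi> i) = (if i = j then 1 else 0)" if "i < 4" "j < 4" for i j
    using shape that len by auto
  define u w where "u = fst F - x0" and "w = snd F - y0"
  define k where "k = 3 / (2 * h\<^sup>2)"
  have grad: "grad (\<psi> 0) F = (- k * (2 * u - h), - 1 / h - k * (h - 2 * w))"
    "grad (\<psi> 1) F = (1 / h + k * (2 * u - h), k * (h - 2 * w))"
    "grad (\<psi> 2) F = (- k * (2 * u - h), 1 / h - k * (h - 2 * w))"
    "grad (\<psi> 3) F = (- 1 / h + k * (2 * u - h), k * (h - 2 * w))"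
    using grad_RQ1_rectangle[OF V h RQ1[of 0]] grad_RQ1_rectangle[OF V h RQ1[of 1]]
      grad_RQ1_rectangle[OF V h RQ1[of 2]] grad_RQ1_rectangle[OF V h RQ1[of 3]]
    unfolding u_def w_def k_def by (simp_all add: avg)
  have vals: "\<sigma> * (n \<bullet> (V ! 0 - D)) = h * (a / h)" "\<sigma> * (n \<bullet> (V ! 1 - D)) = h * (a / h + p)"
    "\<sigma> * (n \<bullet> (V ! 2 - D)) = h * (a / h + p + q)" "\<sigma> * (n \<bullet> (V ! 3 - D)) = h * (a / h + q)"
    unfolding V a_def p_def q_def n using h by (simp_all add: inner_diff_right field_simps)
  have succ: "(0 + 1) mod length V = 1" "(1 + 1) mod length V = 2" "(2 + 1) mod length V = 3"
    "(3 + 1) mod length V = 0"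
    by (simp_all add: len)
  note \<delta> = edge_avg_on_level_side[OF _ \<sigma> Tm]
  have "{..<4::nat} = {0, 1, 2, 3}" by auto
  then have S: "gamma_delta V \<psi> Tm Tp D n F
      = (grad (\<psi> 0) F \<bullet> n) * (\<sigma> * (h * mean_min0 (a / h) (a / h + p)))
      + (grad (\<psi> 1) F \<bullet> n) * (\<sigma> * (h * mean_min0 (a / h + p) (a / h + p + q)))
      + (grad (\<psi> 2) F \<bullet> n) * (\<sigma> * (h * mean_min0 (a / h + p + q) (a / h + q)))
      + (grad (\<psi> 3) F \<bullet> n) * (\<sigma> * (h * mean_min0 (a / h + q) (a / h)))"
    unfolding gamma_delta_eq_sum_edges[OF Tm Tp] len
    using \<delta>[of 0, unfolded succ vals mean_min0_scale[OF h]]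
      \<delta>[of 1, unfolded succ vals mean_min0_scale[OF h]]
      \<delta>[of 2, unfolded succ vals mean_min0_scale[OF h]]
      \<delta>[of 3, unfolded succ vals mean_min0_scale[OF h]]
    by (simp add: len)
  have \<sigma>\<sigma>: "\<sigma> * (\<sigma> * x) = x" for x using \<sigma> by auto
  have n_pq: "n = (\<sigma> * p, \<sigma> * q)" unfolding p_def q_def \<sigma>\<sigma> by simp
  show ?thesis
    unfolding S unfolding grad n_pq rect_form_def Let_def k_def u_def[symmetric] w_def[symmetric]
    using h by (simp add: field_simps power2_eq_square \<sigma>\<sigma>)
qed

lemma gamma_delta_rectangle_bounds:
  assumes h: "0 < h" and V: "V \<in> cart_rectangles h"
    and shape: "\<forall>i < length V. \<psi> i \<in> RQ1_space \<and>
                  (\<forall>j < length V. edge_avg V j (\<psi> i) = (if i = j then 1 else 0))"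
    and n: "norm n = 1" and \<sigma>: "\<sigma> \<in> {-1, 1}"
    and Tm: "Tm = {X \<in> elem V. \<sigma> * (n \<bullet> (X - D)) < 0}"
    and Tp: "Tp = {X \<in> elem V. \<sigma> * (n \<bullet> (X - D)) > 0}"
    and F_elem: "F \<in> elem V" and F_line: "n \<bullet> (F - D) = 0"
  shows "0 \<le> gamma_delta V \<psi> Tm Tp D n F \<and> gamma_delta V \<psi> Tm Tp D n F \<le> 1"
proof -
  obtain x0 y0 where V: "V = [(x0, y0), (x0 + h, y0), (x0 + h, y0 + h), (x0, y0 + h)]"
    using V unfolding cart_rectangles_def by blast
  define a p q where "a = \<sigma> * (n \<bullet> ((x0, y0) - D))" and "p = \<sigma> * fst n" and "q = \<sigma> * snd n"
  define u w where "u = fst F - x0" and "w = snd F - y0"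
  have "p\<^sup>2 + q\<^sup>2 = 1"
    using \<sigma> norm_unit_pair[OF n] unfolding p_def q_def by (auto simp: power_mult_distrib)
  moreover have "elem V \<subseteq> cbox (x0, y0) (x0 + h, y0 + h)"
    unfolding elem_def using V h by (intro hull_minimal) (auto intro: convex_box)
  then have "0 \<le> u / h" "u / h \<le> 1" "0 \<le> w / h" "w / h \<le> 1"
    using F_elem h unfolding u_def w_def by (cases F; auto)+
  moreover have "a + p * u + q * w = \<sigma> * (n \<bullet> (F - D))"
    unfolding a_def p_def q_def u_def w_def
    by (cases n, cases F) (simp add: inner_diff_right algebra_simps)
  then have "a / h + p * (u / h) + q * (w / h) = 0"
    using F_line by (simp add: add_divide_distrib[symmetric])
  ultimately show ?thesis
    unfolding gamma_delta_rectangle[OF h V shape \<sigma> Tm Tp] a_def[symmetric] p_def[symmetric]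
      q_def[symmetric] u_def[symmetric] w_def[symmetric]
    by (intro rect_form_bounds)
qed

theorem mainTheorem3:
  fixes h :: real
    and V :: "(real \<times> real) list"
    and Pi :: "(real \<times> real \<Rightarrow> real) set"
    and \<psi> :: "nat \<Rightarrow> real \<times> real \<Rightarrow> real"
    and D E F n :: "real \<times> real"
    and \<sigma> :: real
    and Tp Tm :: "(real \<times> real) set"
    and k1 k2 :: nat
  assumes h_pos: "h > 0"
    and elem_kind: "(V \<in> cart_triangles h \<and> Pi = CR_space) \<or> (V \<in> cart_rectangles h \<and> Pi = RQ1_space)"
    and shape: "\<forall>i < length V. \<psi> i \<in> Pi \<and>
                  (\<forall>j < length V. edge_avg V j (\<psi> i) = (if i = j then 1 else 0))"
    and D_edge: "k1 < length V" "D \<in> edge V k1"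
    and E_edge: "k2 < length V" "E \<in> edge V k2"
    and diff_edges: "k1 \<noteq> k2"
    and DE: "D \<noteq> E"
    and crosses: "open_segment D E \<subseteq> interior (elem V)"
    and n_unit: "norm n = 1"
    and n_normal: "n \<bullet> (E - D) = 0"
    and sigma: "\<sigma> \<in> {-1, 1}"
    and Tm_def: "Tm = {X \<in> elem V. \<sigma> * (n \<bullet> (X - D)) < 0}"
    and Tp_def: "Tp = {X \<in> elem V. \<sigma> * (n \<bullet> (X - D)) > 0}"
    and labelling: "card (I_bar V Tm Tp) \<le> card (I_bar V Tp Tm)"
    and F_on_l: "F \<in> closed_segment D E"
  shows "0 \<le> (\<Sum>i \<in> I_bar V Tm Tp.
                (grad (\<psi> i) F \<bullet> n) * edge_avg_on V i Tm (\<lambda>X. n \<bullet> (X - D)))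
       \<and> (\<Sum>i \<in> I_bar V Tm Tp.
                (grad (\<psi> i) F \<bullet> n) * edge_avg_on V i Tm (\<lambda>X. n \<bullet> (X - D))) \<le> 1"
proof -
  have "closed_segment D E \<subseteq> elem V"
    using D_edge E_edge edge_subset_elem by (intro closed_segment_subset convex_elem) blast+
  then have F_elem: "F \<in> elem V" using F_on_l by blast
  obtain t where "F = (1 - t) *\<^sub>R D + t *\<^sub>R E" using F_on_l unfolding in_segment(1) by blast
  then have "F - D = t *\<^sub>R (E - D)" by (simp add: algebra_simps)
  then have F_line: "n \<bullet> (F - D) = 0" using n_normal by simp
  from elem_kind have "0 \<le> gamma_delta V \<psi> Tm Tp D n F \<and> gamma_delta V \<psi> Tm Tp D n F \<le> 1"
  proof
    assume "V \<in> cart_triangles h \<and> Pi = CR_space"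
    then show ?thesis
      using shape
      by (intro gamma_delta_triangle_bounds[OF h_pos _ _ n_unit sigma Tm_def Tp_def]) auto
  next
    assume "V \<in> cart_rectangles h \<and> Pi = RQ1_space"
    then show ?thesis
      using shape
      by (intro gamma_delta_rectangle_bounds[OF h_pos _ _ n_unit sigma Tm_def Tp_def F_elem F_line])
        auto
  qed
  then show ?thesis unfolding gamma_delta_def .
qed

end
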